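(* Let $b\in(0,+\infty]$, $\beta>0$, $\alpha\ge0$, and $L'>L\ge0$ with $L+\alpha>0$. If $u,g\in\mathbb R$ satisfy $u\in H^{FP}_{\alpha,\beta,L,b}(g)$, then $u\in H^{FP}_{\alpha,\beta,L',b}(g)$.
   Context: For $L\ge0$ with $L+\alpha>0$, put $s:=\beta/(L+\alpha)$; the set $H^{FP}_{\alpha,\beta,L,b}(g)$ for $g\in\mathbb R$ is defined as follows. If $\sqrt{2s}\le b$: $u\in H^{FP}_{\alpha,\beta,L,b}(g)$ iff one of (a) $u=-b$ and $g\ge\alpha b$; (b) $u=b$ and $g\le-\alpha b$; (c) $u=0$ and $|g|\le(L+\alpha)\sqrt{2s}$; (d) $\alpha>0$, $\alpha u=-g$ and $|g|\in\alpha[\sqrt{2s},b]$; (e) $\alpha=0$, $g=0$ and $|u|\in[\sqrt{2s},b]$ holds (with (a),(b) void if $b=+\infty$). If $\sqrt{2s}>b$: $u\in H^{FP}_{\alpha,\beta,L,b}(g)$ iff one of (a) $u=-b$ and $g\ge(L+\alpha)(b/2+s/b)-Lb$; (b) $u=b$ and $g\le-\big((L+\alpha)(b/2+s/b)-Lb\big)$; (c) $u=0$ and $|g|\le(L+\alpha)(b/2+s/b)$; (d) $\alpha>0$, $\alpha u=-g$ and $|g|\in\alpha[\sqrt{2s},b]$; (e) $\alpha=0$, $g=0$ and $|u|\in[\sqrt{2s},b]$ holds. *)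

theory Defs
  imports Complex_Main "HOL-Library.Extended_Real"
begin

text \<open>The set H^FP_{alpha,beta,L,b}(g). The parameter b ranges over (0,+infinity],
  modelled as an extended real. Cases (a),(b) require b finite (they are void for b = infinity).\<close>

definition HFP :: "real \<Rightarrow> real \<Rightarrow> real \<Rightarrow> ereal \<Rightarrow> real \<Rightarrow> real set" where
  "HFP \<alpha> \<beta> L b g = (let s = \<beta> / (L + \<alpha>); bb = real_of_ereal b in
     if ereal (sqrt (2 * s)) \<le> b then
       {u. (b \<noteq> \<infinity> \<and> u = - bb \<and> g \<ge> \<alpha> * bb)
         \<or> (b \<noteq> \<infinity> \<and> u = bb \<and> g \<le> - (\<alpha> * bb))
         \<or> (u = 0 \<and> \<bar>g\<bar> \<le> (L + \<alpha>) * sqrt (2 * s))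
         \<or> (\<alpha> > 0 \<and> \<alpha> * u = - g \<and> \<alpha> * sqrt (2 * s) \<le> \<bar>g\<bar> \<and> ereal \<bar>g\<bar> \<le> ereal \<alpha> * b)
         \<or> (\<alpha> = 0 \<and> g = 0 \<and> sqrt (2 * s) \<le> \<bar>u\<bar> \<and> ereal \<bar>u\<bar> \<le> b)}
     else
       {u. (u = - bb \<and> g \<ge> (L + \<alpha>) * (bb / 2 + s / bb) - L * bb)
         \<or> (u = bb \<and> g \<le> - ((L + \<alpha>) * (bb / 2 + s / bb) - L * bb))
         \<or> (u = 0 \<and> \<bar>g\<bar> \<le> (L + \<alpha>) * (bb / 2 + s / bb))
         \<or> (\<alpha> > 0 \<and> \<alpha> * u = - g \<and> \<alpha> * sqrt (2 * s) \<le> \<bar>g\<bar> \<and> \<bar>g\<bar> \<le> \<alpha> * bb)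
         \<or> (\<alpha> = 0 \<and> g = 0 \<and> sqrt (2 * s) \<le> \<bar>u\<bar> \<and> \<bar>u\<bar> \<le> bb)})"

end

theory Submission
  imports Defs
begin

text \<open>All three thresholds in the definition of HFP move in the favourable direction as L grows:
  the switching point r = \<surd>(2\<beta>/(L+\<alpha>)) of the clauses (d)/(e) decreases, the bound of clause (c)
  increases and the bound of clauses (a)/(b) decreases. Inside each regime this is elementary
  monotonicity; when growing L moves b from the regime \<open>r > b\<close> into \<open>r \<le> b\<close>, the old bounds
  compare with the new ones because \<open>(L+\<alpha>) b\<^sup>2 < 2\<beta> \<le> (L'+\<alpha>) b\<^sup>2\<close>.\<close>

definition HFP_clauses :: "real \<Rightarrow> ereal \<Rightarrow> real \<Rightarrow> real \<Rightarrow> real \<Rightarrow> real \<Rightarrow> real set" where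
  "HFP_clauses \<alpha> b p q r g =
     {u. (b \<noteq> \<infinity> \<and> u = - real_of_ereal b \<and> g \<ge> p)
       \<or> (b \<noteq> \<infinity> \<and> u = real_of_ereal b \<and> g \<le> - p)
       \<or> (u = 0 \<and> \<bar>g\<bar> \<le> q)
       \<or> (\<alpha> > 0 \<and> \<alpha> * u = - g \<and> \<alpha> * r \<le> \<bar>g\<bar> \<and> ereal \<bar>g\<bar> \<le> ereal \<alpha> * b)
       \<or> (\<alpha> = 0 \<and> g = 0 \<and> r \<le> \<bar>u\<bar> \<and> ereal \<bar>u\<bar> \<le> b)}"

definition HFP_edge_bound :: "real \<Rightarrow> real \<Rightarrow> real \<Rightarrow> ereal \<Rightarrow> real" where
  "HFP_edge_bound \<alpha> \<beta> L b = (let s = \<beta> / (L + \<alpha>); c = real_of_ereal b in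
     if ereal (sqrt (2 * s)) \<le> b then \<alpha> * c else (L + \<alpha>) * (c / 2 + s / c) - L * c)"

definition HFP_zero_bound :: "real \<Rightarrow> real \<Rightarrow> real \<Rightarrow> ereal \<Rightarrow> real" where
  "HFP_zero_bound \<alpha> \<beta> L b = (let s = \<beta> / (L + \<alpha>); c = real_of_ereal b in
     if ereal (sqrt (2 * s)) \<le> b then (L + \<alpha>) * sqrt (2 * s) else (L + \<alpha>) * (c / 2 + s / c))"

lemma HFP_eq_HFP_clauses:
  assumes "b \<noteq> -\<infinity>"
  shows "HFP \<alpha> \<beta> L b g =
    HFP_clauses \<alpha> b (HFP_edge_bound \<alpha> \<beta> L b) (HFP_zero_bound \<alpha> \<beta> L b) (sqrt (2 * (\<beta> / (L + \<alpha>)))) g"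
  using assms
  by (cases b) (auto simp: HFP_def HFP_clauses_def HFP_edge_bound_def HFP_zero_bound_def Let_def)

lemma HFP_clauses_mono:
  assumes "p' \<le> p" and "q \<le> q'" and "r' \<le> r"
  shows "HFP_clauses \<alpha> b p q r g \<subseteq> HFP_clauses \<alpha> b p' q' r' g"
proof
  fix u assume "u \<in> HFP_clauses \<alpha> b p q r g"
  moreover have "\<alpha> * r' \<le> \<alpha> * r" if "\<alpha> > 0" using that assms(3) by simp
  ultimately show "u \<in> HFP_clauses \<alpha> b p' q' r' g"
    using assms unfolding HFP_clauses_def mem_Collect_eq by (elim disjE) linarith+
qed

lemma mult_sqrt_two_div_self:
  assumes "t > 0"
  shows "t * sqrt (2 * (\<beta> / t)) = sqrt (2 * \<beta> * t)"
proof -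
  have "t * sqrt (2 * (\<beta> / t)) = sqrt (t\<^sup>2) * sqrt (2 * (\<beta> / t))"
    using assms by simp
  also have "\<dots> = sqrt (t\<^sup>2 * (2 * (\<beta> / t)))"
    by (rule real_sqrt_mult[symmetric])
  also have "t\<^sup>2 * (2 * (\<beta> / t)) = 2 * \<beta> * t"
    using assms by (simp add: power2_eq_square field_simps)
  finally show ?thesis .
qed

lemma sqrt_two_div_le_iff:
  assumes "t > 0" and "c > 0"
  shows "sqrt (2 * (\<beta> / t)) \<le> c \<longleftrightarrow> 2 * \<beta> \<le> t * c\<^sup>2"
proof -
  have "sqrt (2 * (\<beta> / t)) \<le> c \<longleftrightarrow> 2 * (\<beta> / t) \<le> c\<^sup>2"
    using assms(2) by (metis abs_of_pos real_sqrt_abs real_sqrt_le_iff)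
  also have "\<dots> \<longleftrightarrow> 2 * \<beta> \<le> t * c\<^sup>2"
    using assms(1) by (simp add: field_simps)
  finally show ?thesis .
qed

lemma sqrt_two_div_antimono:
  assumes "\<beta> \<ge> 0" and "t > 0" and "t \<le> t'"
  shows "sqrt (2 * (\<beta> / t')) \<le> sqrt (2 * (\<beta> / t))"
  using assms by (simp add: frac_le)

text \<open>The (c) bound of the regime \<open>r > c\<close> at L is below the one of the regime \<open>r \<le> c\<close> at L':
  AM-GM gives \<open>t c/2 + \<beta>/c < 2\<beta>/c \<le> \<surd>(2\<beta>t')\<close>.\<close>

lemma zero_bound_across_regimes:
  assumes "t > 0" and "c > 0" and "\<beta> > 0"
    and "t * c\<^sup>2 < 2 * \<beta>" and "2 * \<beta> \<le> t' * c\<^sup>2"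
  shows "t * (c / 2 + \<beta> / t / c) \<le> t' * sqrt (2 * (\<beta> / t'))"
proof -
  have "t' > 0" using assms by (smt (verit) mult_nonpos_nonneg zero_le_power2)
  have "t * (c / 2 + \<beta> / t / c) = t * c / 2 + \<beta> / c"
    using assms(1,2) by (simp add: field_simps)
  also have "\<dots> \<le> 2 * \<beta> / c"
    using assms(2,4) by (simp add: field_simps power2_eq_square)
  also have "\<dots> = sqrt ((2 * \<beta> / c)\<^sup>2)"
    using assms(2,3) by simp
  also have "\<dots> \<le> sqrt (2 * \<beta> * t')"
  proof (rule real_sqrt_le_mono)
    have "(2 * \<beta> / c)\<^sup>2 = 2 * \<beta> * (2 * \<beta> / c\<^sup>2)"
      by (simp add: power2_eq_square)
    also have "\<dots> \<le> 2 * \<beta> * t'"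
      using assms(2,3,5) by (simp add: pos_divide_le_eq)
    finally show "(2 * \<beta> / c)\<^sup>2 \<le> 2 * \<beta> * t'" .
  qed
  also have "\<dots> = t' * sqrt (2 * (\<beta> / t'))"
    using mult_sqrt_two_div_self[OF \<open>t' > 0\<close>] by simp
  finally show ?thesis .
qed

lemma HFP_zero_bound_mono:
  assumes "b > 0" and "\<beta> > 0" and "L + \<alpha> > 0" and "L \<le> L'"
  shows "HFP_zero_bound \<alpha> \<beta> L b \<le> HFP_zero_bound \<alpha> \<beta> L' b"
proof -
  define t t' where "t = L + \<alpha>" and "t' = L' + \<alpha>"
  have t: "t > 0" "t \<le> t'" using assms by (auto simp: t_def t'_def)
  have large: "t * sqrt (2 * (\<beta> / t)) \<le> t' * sqrt (2 * (\<beta> / t'))"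
    using t assms(2) mult_sqrt_two_div_self[of t] mult_sqrt_two_div_self[of t'] by simp
  show ?thesis
  proof (cases b)
    case PInf
    then show ?thesis using large by (simp add: HFP_zero_bound_def t_def t'_def)
  next
    case (real c)
    have "c > 0" using assms(1) real by simp
    have small: "t * (c / 2 + \<beta> / t / c) \<le> t' * (c / 2 + \<beta> / t' / c)"
      using t \<open>c > 0\<close> by (simp add: field_simps)
    have across: "t * (c / 2 + \<beta> / t / c) \<le> t' * sqrt (2 * (\<beta> / t'))"
      if "\<not> sqrt (2 * (\<beta> / t)) \<le> c" "sqrt (2 * (\<beta> / t')) \<le> c"
    proof (rule zero_bound_across_regimes)
      show "t * c\<^sup>2 < 2 * \<beta>"
        using that(1) sqrt_two_div_le_iff[OF t(1) \<open>c > 0\<close>] by simp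
      show "2 * \<beta> \<le> t' * c\<^sup>2"
        using that(2) t \<open>c > 0\<close> sqrt_two_div_le_iff[of t' c] by simp
    qed (use t \<open>c > 0\<close> assms(2) in auto)
    have "sqrt (2 * (\<beta> / t')) \<le> sqrt (2 * (\<beta> / t))"
      using t assms(2) by (intro sqrt_two_div_antimono) auto
    then have "sqrt (2 * (\<beta> / t)) \<le> c \<Longrightarrow> sqrt (2 * (\<beta> / t')) \<le> c" by linarith
    then show ?thesis using real large small across
      by (auto simp: HFP_zero_bound_def Let_def t_def[symmetric] t'_def[symmetric])
  qed (use assms(1) in simp)
qed

lemma HFP_edge_bound_antimono:
  assumes "b > 0" and "\<beta> > 0" and "L + \<alpha> > 0" and "L \<le> L'"
  shows "HFP_edge_bound \<alpha> \<beta> L' b \<le> HFP_edge_bound \<alpha> \<beta> L b"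
proof (cases b)
  case PInf
  then show ?thesis by (simp add: HFP_edge_bound_def)
next
  case (real c)
  define t t' where "t = L + \<alpha>" and "t' = L' + \<alpha>"
  have t: "t > 0" "t \<le> t'" using assms by (auto simp: t_def t'_def)
  have "c > 0" using assms(1) real by simp
  have edge: "t * (c / 2 + \<beta> / t / c) - L * c = (t - 2 * L) * c / 2 + \<beta> / c"
    if "t > 0" for t L
    using that \<open>c > 0\<close> by (simp add: field_simps)
  have small: "t' * (c / 2 + \<beta> / t' / c) - L' * c \<le> t * (c / 2 + \<beta> / t / c) - L * c"
    using edge[of t' L'] edge[of t L] t \<open>c > 0\<close> assms(4)
    by (simp add: t_def t'_def mult_right_mono)
  have across: "\<alpha> * c \<le> t * (c / 2 + \<beta> / t / c) - L * c"
    if "\<not> sqrt (2 * (\<beta> / t)) \<le> c"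
  proof -
    have "t * c\<^sup>2 < 2 * \<beta>" using that sqrt_two_div_le_iff[OF t(1) \<open>c > 0\<close>] by simp
    then have "t * c / 2 \<le> \<beta> / c" using \<open>c > 0\<close> by (simp add: field_simps power2_eq_square)
    moreover have "(t - 2 * L) * c / 2 = \<alpha> * c - t * c / 2"
      by (simp add: t_def field_simps)
    ultimately show ?thesis using edge[OF t(1), of L] by linarith
  qed
  have "sqrt (2 * (\<beta> / t')) \<le> sqrt (2 * (\<beta> / t))"
    using t assms(2) by (intro sqrt_two_div_antimono) auto
  then have "sqrt (2 * (\<beta> / t)) \<le> c \<Longrightarrow> sqrt (2 * (\<beta> / t')) \<le> c" by linarith
  then show ?thesis using real small across
    by (auto simp: HFP_edge_bound_def Let_def t_def[symmetric] t'_def[symmetric])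
qed (use assms(1) in simp_all)

theorem mainTheorem13:
  fixes b :: ereal and \<alpha> \<beta> L L' u g :: real
  assumes "b > 0" and "\<beta> > 0" and "\<alpha> \<ge> 0" and "L \<ge> 0" and "L' > L" and "L + \<alpha> > 0"
    and "u \<in> HFP \<alpha> \<beta> L b g"
  shows "u \<in> HFP \<alpha> \<beta> L' b g"
proof -
  have "b \<noteq> -\<infinity>" using assms(1) by auto
  have "HFP \<alpha> \<beta> L b g \<subseteq> HFP \<alpha> \<beta> L' b g"
    unfolding HFP_eq_HFP_clauses[OF \<open>b \<noteq> -\<infinity>\<close>]
  proof (rule HFP_clauses_mono)
    show "HFP_edge_bound \<alpha> \<beta> L' b \<le> HFP_edge_bound \<alpha> \<beta> L b"
      using assms by (intro HFP_edge_bound_antimono) auto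
    show "HFP_zero_bound \<alpha> \<beta> L b \<le> HFP_zero_bound \<alpha> \<beta> L' b"
      using assms by (intro HFP_zero_bound_mono) auto
    show "sqrt (2 * (\<beta> / (L' + \<alpha>))) \<le> sqrt (2 * (\<beta> / (L + \<alpha>)))"
      using assms by (intro sqrt_two_div_antimono) auto
  qed
  then show ?thesis using assms(7) by blast
qed

end
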